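(* Let $H_{ij}$, $i=1,\ldots,b$, $j=1,\ldots,s_i$, be $n=\sum_i s_i$ null hypotheses with $p$-values $P_{ij}$, where true-null $p$-values are $U(0,1)$ and the rows $(P_{i1},\ldots,P_{is_i})$, $i=1,\ldots,b$, are mutually independent (arbitrary dependence within rows). Let $n_0\ge1$ be the number of true nulls, $s_{\max}=\max_i s_i$, and $R(\lambda)=\sum_{i=1}^b\sum_{j=1}^{s_i}I(P_{ij}\le\lambda)$. For any $\lambda$ with $(2b+3)^{-2/(b+2)}\le\lambda<1$, the estimator $$\widehat n_0^{(1)}(\mathbf P)=\frac{n-R(\lambda)+s_{\max}}{1-\lambda}$$ satisfies Property 1, i.e. it is non-decreasing in each $P_{ij}$ and $$\sum_{i=1}^b\sum_{j=1}^{s_i}I(H_{ij}=0)\,E_{DU}\left\{\frac{1}{\widehat n_0^{(1)}(\mathbf P^{(-i)},\mathbf 0)}\right\}\le 1.$$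
   Context: $H_{ij}=0$ means $H_{ij}$ is true. $\mathbf P=((P_{ij}))$ is the collection of all $p$-values; $\mathbf P^{(-i)}$ is the collection with the $i$th row deleted, and $\widehat n_0(\mathbf P^{(-i)},\mathbf 0)$ is the value of $\widehat n_0(\mathbf P)$ when all entries of the $i$th row are replaced by $0$. $E_{DU}$ denotes expectation under the Dirac-uniform configuration of $\mathbf P^{(-i)}$: the $p$-values in $\mathbf P^{(-i)}$ corresponding to false null hypotheses are set to $0$, and the remaining ones are $U(0,1)$ distributed, with the rows still mutually independent. An estimator $\widehat n_0(\mathbf P)$ is said to satisfy Property 1 if it is non-decreasing in each $P_{ij}$ and satisfies the displayed inequality. *)

theory Defs
  imports "HOL-Probability.Probability"
begin

text \<open>Hypotheses are indexed by (i,j) with i < b (rows / blocks) and j < s i.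
  H i j = True means the null hypothesis H_ij is true (H_ij = 0 in the paper).\<close>

definition n_total :: "nat \<Rightarrow> (nat \<Rightarrow> nat) \<Rightarrow> nat" where
  "n_total b s = (\<Sum>i<b. s i)"

definition n_true :: "nat \<Rightarrow> (nat \<Rightarrow> nat) \<Rightarrow> (nat \<Rightarrow> nat \<Rightarrow> bool) \<Rightarrow> nat" where
  "n_true b s H = card {(i, j). i < b \<and> j < s i \<and> H i j}"

definition s_max :: "nat \<Rightarrow> (nat \<Rightarrow> nat) \<Rightarrow> nat" where
  "s_max b s = Max (s ` {..<b})"

definition R_count :: "nat \<Rightarrow> (nat \<Rightarrow> nat) \<Rightarrow> real \<Rightarrow> (nat \<Rightarrow> nat \<Rightarrow> real) \<Rightarrow> real" where
  "R_count b s lam P = (\<Sum>i<b. \<Sum>j<s i. if P i j \<le> lam then 1 else 0)"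

definition n0hat1 :: "nat \<Rightarrow> (nat \<Rightarrow> nat) \<Rightarrow> real \<Rightarrow> (nat \<Rightarrow> nat \<Rightarrow> real) \<Rightarrow> real" where
  "n0hat1 b s lam P = (real (n_total b s) - R_count b s lam P + real (s_max b s)) / (1 - lam)"

definition coordwise_mono ::
  "nat \<Rightarrow> (nat \<Rightarrow> nat) \<Rightarrow> ((nat \<Rightarrow> nat \<Rightarrow> real) \<Rightarrow> real) \<Rightarrow> bool" where
  "coordwise_mono b s est \<longleftrightarrow>
     (\<forall>P i j x y. i < b \<longrightarrow> j < s i \<longrightarrow> x \<le> y \<longrightarrow>
        est (P(i := (P i)(j := x))) \<le> est (P(i := (P i)(j := y))))"

text \<open>Dirac-uniform configuration of P^(-i) with the i-th row replaced by 0: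
  omega k is a realisation of row k; false-null p-values are set to 0, true-null
  ones are taken from omega, and row i is set to 0.\<close>
definition DU_minus :: "(nat \<Rightarrow> nat \<Rightarrow> bool) \<Rightarrow> nat \<Rightarrow> (nat \<Rightarrow> nat \<Rightarrow> real) \<Rightarrow> (nat \<Rightarrow> nat \<Rightarrow> real)" where
  "DU_minus H i \<omega> = (\<lambda>k j. if k = i then 0 else if H k j then \<omega> k j else 0)"

text \<open>Product (independent rows) of the row laws M k.\<close>
definition DU_space :: "nat \<Rightarrow> (nat \<Rightarrow> (nat \<Rightarrow> real) measure) \<Rightarrow> (nat \<Rightarrow> nat \<Rightarrow> real) measure" where
  "DU_space b M = PiM {..<b} M"

text \<open>Property 1, relative to the row laws M (of which only the joint law of the
  true-null coordinates matters).  E_DU is the Lebesgue integral over the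
  product of the rows; we also require integrability so that the expectation is
  genuinely defined.\<close>
definition property1 ::
  "nat \<Rightarrow> (nat \<Rightarrow> nat) \<Rightarrow> (nat \<Rightarrow> nat \<Rightarrow> bool) \<Rightarrow> (nat \<Rightarrow> (nat \<Rightarrow> real) measure)
     \<Rightarrow> ((nat \<Rightarrow> nat \<Rightarrow> real) \<Rightarrow> real) \<Rightarrow> bool" where
  "property1 b s H M est \<longleftrightarrow>
     coordwise_mono b s est \<and>
     (\<forall>i<b. integrable (DU_space b M) (\<lambda>\<omega>. 1 / est (DU_minus H i \<omega>))) \<and>
     (\<Sum>i<b. \<Sum>j<s i. (if H i j then 1 else 0) *
         integral\<^sup>L (DU_space b M) (\<lambda>\<omega>. 1 / est (DU_minus H i \<omega>))) \<le> (1::real)"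

end

theory Submission
  imports Defs
begin

text \<open>Under the Dirac-uniform configuration with row i set to 0, only the true nulls above
  \<open>\<lambda>\<close> in the other rows escape the count \<open>R(\<lambda>)\<close>; writing \<open>y\<^sub>k\<close> for their number in row k and
  \<open>T\<^sub>i = \<Sum>\<^sub>k\<^sub>\<noteq>\<^sub>i y\<^sub>k\<close>, the estimator becomes \<open>(s\<^sub>m\<^sub>a\<^sub>x + T\<^sub>i)/(1-\<lambda>)\<close>.  Since \<open>E y\<^sub>i = m\<^sub>i(1-\<lambda>)\<close>
  for the \<open>m\<^sub>i\<close> true nulls in row i, and \<open>y\<^sub>i\<close> is independent of \<open>T\<^sub>i\<close>,
  \<open>m\<^sub>i E[(1-\<lambda>)/(s\<^sub>m\<^sub>a\<^sub>x+T\<^sub>i)] = E[y\<^sub>i/(s\<^sub>m\<^sub>a\<^sub>x+T\<^sub>i)] \<le> E[y\<^sub>i/(y\<^sub>i+T\<^sub>i)]\<close>,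
  and these last quantities sum to at most 1 over i.\<close>

lemma (in product_sigma_finite) integral_component_mult_independent:
  fixes f :: "'a \<Rightarrow> real" and g :: "('i \<Rightarrow> 'a) \<Rightarrow> real"
  assumes I: "finite I" "i \<notin> I"
    and int_fg: "integrable (Pi\<^sub>M (insert i I) M) (\<lambda>\<omega>. f (\<omega> i) * g \<omega>)"
    and int_g: "integrable (Pi\<^sub>M (insert i I) M) g"
    and g_indep: "\<And>x z. g (x(i := z)) = g x"
    and prob: "prob_space (M i)"
  shows "(\<integral>\<omega>. f (\<omega> i) * g \<omega> \<partial>Pi\<^sub>M (insert i I) M)
           = integral\<^sup>L (M i) f * integral\<^sup>L (Pi\<^sub>M (insert i I) M) g"
proof -
  have "(\<integral>\<omega>. f (\<omega> i) * g \<omega> \<partial>Pi\<^sub>M (insert i I) M) = (\<integral>\<omega>. (\<integral>z. f z * g \<omega> \<partial>M i) \<partial>Pi\<^sub>M I M)"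
    using product_integral_insert[OF I int_fg] by (simp add: g_indep)
  also have "\<dots> = integral\<^sup>L (M i) f * (\<integral>x. g x \<partial>Pi\<^sub>M I M)"
    by simp
  also have "(\<integral>x. g x \<partial>Pi\<^sub>M I M) = (\<integral>x. (\<integral>z. g (x(i := z)) \<partial>M i) \<partial>Pi\<^sub>M I M)"
    by (simp add: g_indep prob_space.prob_space[OF prob])
  also have "\<dots> = integral\<^sup>L (Pi\<^sub>M (insert i I) M) g"
    using product_integral_insert[OF I int_g] by simp
  finally show ?thesis .
qed

lemma divide_add_le_divide_self_add:
  fixes a t S :: real
  assumes "0 \<le> a" "a \<le> S" "0 \<le> t"
  shows "a / (S + t) \<le> a / (a + t)"
proof (cases "a = 0")
  case False
  then show ?thesis using assms by (intro divide_left_mono) auto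
qed simp

context finite_product_prob_space
begin

lemma integrable_inverse_shift_sum_components:
  fixes y :: "'a \<Rightarrow> 'b \<Rightarrow> real"
  assumes "J \<subseteq> I" "\<And>k. k \<in> J \<Longrightarrow> y k \<in> borel_measurable (M k)"
    and "\<And>k x. 0 \<le> y k x" "0 < S"
  shows "integrable (Pi\<^sub>M I M) (\<lambda>\<omega>. 1 / (S + (\<Sum>k\<in>J. y k (\<omega> k))))"
proof (rule P.integrable_const_bound[where B = "1 / S"])
  show "AE \<omega> in Pi\<^sub>M I M. norm (1 / (S + (\<Sum>k\<in>J. y k (\<omega> k)))) \<le> 1 / S"
    using assms by (intro AE_I2) (simp add: frac_le add_increasing2 sum_nonneg)
  have "(\<lambda>\<omega>. y k (\<omega> k)) \<in> borel_measurable (Pi\<^sub>M I M)" if "k \<in> J" for k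
  proof -
    have "k \<in> I" using that assms(1) by auto
    from measurable_compose[OF measurable_component_singleton[OF this, where M = M] assms(2)[OF that]]
    show ?thesis .
  qed
  then show "(\<lambda>\<omega>. 1 / (S + (\<Sum>k\<in>J. y k (\<omega> k)))) \<in> borel_measurable (Pi\<^sub>M I M)"
    by (intro borel_measurable_divide borel_measurable_add borel_measurable_sum) auto
qed

lemma sum_expectation_mult_inverse_others_le_1:
  fixes y :: "'a \<Rightarrow> 'b \<Rightarrow> real"
  assumes y_meas: "\<And>k. k \<in> I \<Longrightarrow> y k \<in> borel_measurable (M k)"
    and y_nonneg: "\<And>k x. 0 \<le> y k x" and y_le: "\<And>k x. k \<in> I \<Longrightarrow> y k x \<le> S"
    and S_pos: "0 < S"
  shows "(\<Sum>i\<in>I. integral\<^sup>L (M i) (y i)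
            * (\<integral>\<omega>. 1 / (S + (\<Sum>k\<in>I - {i}. y k (\<omega> k))) \<partial>Pi\<^sub>M I M)) \<le> 1"
proof -
  define Y where "Y \<omega> = (\<Sum>k\<in>I. y k (\<omega> k))" for \<omega>
  define share where "share i \<omega> = y i (\<omega> i) / Y \<omega>" for i \<omega>
  have yc_meas: "(\<lambda>\<omega>. y k (\<omega> k)) \<in> borel_measurable (Pi\<^sub>M I M)" if "k \<in> I" for k
    using measurable_compose[OF measurable_component_singleton[OF that, where M = M] y_meas[OF that]] .
  have Y_split: "Y \<omega> = y i (\<omega> i) + (\<Sum>k\<in>I - {i}. y k (\<omega> k))" if "i \<in> I" for i \<omega>
    unfolding Y_def using that finite_index by (subst sum.remove) auto
  have share_int: "integrable (Pi\<^sub>M I M) (share i)" if "i \<in> I" for i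
  proof (rule P.integrable_const_bound[where B = 1])
    show "AE \<omega> in Pi\<^sub>M I M. norm (share i \<omega>) \<le> 1"
    proof (rule AE_I2)
      fix \<omega>
      have "0 \<le> (\<Sum>k\<in>I - {i}. y k (\<omega> k))"
        using y_nonneg by (simp add: sum_nonneg)
      then show "norm (share i \<omega>) \<le> 1"
        using Y_split[OF that] y_nonneg[of i "\<omega> i"] by (simp add: share_def divide_le_eq)
    qed
    show "share i \<in> borel_measurable (Pi\<^sub>M I M)"
      unfolding share_def Y_def using that yc_meas by (auto intro!: borel_measurable_sum)
  qed
  have term_le: "integral\<^sup>L (M i) (y i) * (\<integral>\<omega>. 1 / (S + (\<Sum>k\<in>I - {i}. y k (\<omega> k))) \<partial>Pi\<^sub>M I M)
      \<le> integral\<^sup>L (Pi\<^sub>M I M) (share i)" if i: "i \<in> I" for i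
  proof -
    define g where "g = (\<lambda>\<omega>. 1 / (S + (\<Sum>k\<in>I - {i}. y k (\<omega> k))))"
    have I_eq: "insert i (I - {i}) = I" using i by auto
    have g_int: "integrable (Pi\<^sub>M I M) g"
      unfolding g_def using y_meas y_nonneg S_pos by (intro integrable_inverse_shift_sum_components) auto
    have g_bounds: "0 \<le> g \<omega> \<and> g \<omega> \<le> 1 / S" for \<omega>
      using S_pos y_nonneg by (simp add: g_def frac_le add_increasing2 sum_nonneg)
    have yg_int: "integrable (Pi\<^sub>M I M) (\<lambda>\<omega>. y i (\<omega> i) * g \<omega>)"
    proof (rule P.integrable_const_bound[where B = 1])
      show "AE \<omega> in Pi\<^sub>M I M. norm (y i (\<omega> i) * g \<omega>) \<le> 1"
      proof (rule AE_I2)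
        fix \<omega>
        have "y i (\<omega> i) * g \<omega> \<le> S * (1 / S)"
          using g_bounds y_nonneg y_le[OF i] S_pos by (intro mult_mono) auto
        then show "norm (y i (\<omega> i) * g \<omega>) \<le> 1"
          using g_bounds y_nonneg[of i "\<omega> i"] S_pos by simp
      qed
      show "(\<lambda>\<omega>. y i (\<omega> i) * g \<omega>) \<in> borel_measurable (Pi\<^sub>M I M)"
        using yc_meas[OF i] borel_measurable_integrable[OF g_int] by measurable
    qed
    have "integral\<^sup>L (M i) (y i) * integral\<^sup>L (Pi\<^sub>M I M) g = (\<integral>\<omega>. y i (\<omega> i) * g \<omega> \<partial>Pi\<^sub>M I M)"
      using integral_component_mult_independent[of "I - {i}" i "y i" g] yg_int g_int
        finite_index prob_space unfolding I_eq by (simp add: g_def)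
    also have "\<dots> \<le> integral\<^sup>L (Pi\<^sub>M I M) (share i)"
    proof (rule integral_mono[OF yg_int share_int[OF i]])
      fix \<omega>
      show "y i (\<omega> i) * g \<omega> \<le> share i \<omega>"
        using divide_add_le_divide_self_add[of "y i (\<omega> i)" S "\<Sum>k\<in>I - {i}. y k (\<omega> k)"]
          y_nonneg y_le[OF i]
        by (simp add: g_def share_def Y_split[OF i] sum_nonneg)
    qed
    finally show ?thesis by (simp add: g_def)
  qed
  have "(\<Sum>i\<in>I. integral\<^sup>L (M i) (y i) * (\<integral>\<omega>. 1 / (S + (\<Sum>k\<in>I - {i}. y k (\<omega> k))) \<partial>Pi\<^sub>M I M))
      \<le> (\<Sum>i\<in>I. integral\<^sup>L (Pi\<^sub>M I M) (share i))"
    by (intro sum_mono term_le)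
  also have "\<dots> = (\<integral>\<omega>. (\<Sum>i\<in>I. share i \<omega>) \<partial>Pi\<^sub>M I M)"
    using share_int by (rule Bochner_Integration.integral_sum[symmetric])
  also have "\<dots> \<le> (\<integral>\<omega>. 1 \<partial>Pi\<^sub>M I M)"
  proof (rule integral_mono)
    show "integrable (Pi\<^sub>M I M) (\<lambda>\<omega>. \<Sum>i\<in>I. share i \<omega>)"
      using share_int by auto
    fix \<omega>
    have "(\<Sum>i\<in>I. share i \<omega>) = Y \<omega> / Y \<omega>"
      by (simp add: share_def Y_def sum_divide_distrib[symmetric])
    then show "(\<Sum>i\<in>I. share i \<omega>) \<le> 1" by simp
  qed simp
  also have "\<dots> = 1" by (simp add: P.prob_space)
  finally show ?thesis .
qed

end

lemma measurable_component_of_sets_PiM: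
  fixes N :: "(nat \<Rightarrow> 'a::topological_space) measure"
  assumes "sets N = sets (Pi\<^sub>M {..<n} (\<lambda>_. borel))" "j < n"
  shows "(\<lambda>x. x j) \<in> borel_measurable N"
proof -
  have "(\<lambda>x. x j) \<in> measurable (Pi\<^sub>M {..<n} (\<lambda>_. borel)) (borel :: 'a measure)"
    using assms(2) by (intro measurable_component_singleton) auto
  then show ?thesis
    using measurable_cong_sets[OF assms(1) refl, where N = "borel :: 'a measure"] by simp
qed

lemma integral_uniform_component_greater:
  assumes meas: "(\<lambda>x. x j) \<in> borel_measurable N"
    and unif: "distr N borel (\<lambda>x. x j) = uniform_measure lborel {0..1}"
    and lam: "0 \<le> lam" "lam \<le> 1"
  shows "(\<integral>x. indicator {lam<..} (x j) \<partial>N) = 1 - (lam :: real)"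
proof -
  have "(\<integral>x. indicator {lam<..} (x j) \<partial>N)
      = integral\<^sup>L (distr N borel (\<lambda>x. x j)) (indicator {lam<..} :: real \<Rightarrow> real)"
    using meas by (subst integral_distr) auto
  also have "\<dots> = measure lborel ({0..1} \<inter> {lam<..}) / measure lborel {0..(1::real)}"
    by (simp add: unif)
  also have "{0..1} \<inter> {lam<..} = {lam<..(1::real)}"
    using lam by auto
  finally show ?thesis using lam by simp
qed

definition null_exceedances ::
  "(nat \<Rightarrow> nat) \<Rightarrow> (nat \<Rightarrow> nat \<Rightarrow> bool) \<Rightarrow> real \<Rightarrow> nat \<Rightarrow> (nat \<Rightarrow> real) \<Rightarrow> real" where
  "null_exceedances s H lam k x = (\<Sum>j<s k. if H k j \<and> lam < x j then 1 else 0)"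

lemma null_exceedances_bounds: "0 \<le> null_exceedances s H lam k x \<and> null_exceedances s H lam k x \<le> s k"
proof -
  have "null_exceedances s H lam k x \<le> (\<Sum>j<s k. 1)"
    unfolding null_exceedances_def by (intro sum_mono) auto
  then show ?thesis by (simp add: null_exceedances_def sum_nonneg)
qed

lemma null_exceedances_measurable:
  assumes "sets N = sets (Pi\<^sub>M {..<s k} (\<lambda>_. borel))"
  shows "null_exceedances s H lam k \<in> borel_measurable N"
  unfolding null_exceedances_def
proof (rule borel_measurable_sum)
  fix j assume "j \<in> {..<s k}"
  then have [measurable]: "(\<lambda>x. x j) \<in> borel_measurable N"
    using assms by (auto intro: measurable_component_of_sets_PiM)
  show "(\<lambda>x. if H k j \<and> lam < x j then 1 else 0::real) \<in> borel_measurable N"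
    by (cases "H k j") auto
qed

lemma integral_null_exceedances:
  assumes prob: "prob_space N"
    and sets_N: "sets N = sets (Pi\<^sub>M {..<s k} (\<lambda>_. borel))"
    and unif: "\<And>j. j < s k \<Longrightarrow> H k j \<Longrightarrow> distr N borel (\<lambda>x. x j) = uniform_measure lborel {0..1}"
    and lam: "0 \<le> lam" "lam \<le> 1"
  shows "integral\<^sup>L N (null_exceedances s H lam k) = (\<Sum>j<s k. if H k j then 1 else 0) * (1 - lam)"
proof -
  interpret N: prob_space N by (rule prob)
  define e where "e j = (\<lambda>x. if H k j then indicator {lam<..} (x j) else 0 :: real)" for j
  have e_meas: "e j \<in> borel_measurable N" if "j < s k" for j
  proof -
    note [measurable] = measurable_component_of_sets_PiM[OF sets_N that]
    show ?thesis unfolding e_def by measurable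
  qed
  have e_int: "integrable N (e j)" if "j < s k" for j
  proof (rule N.integrable_const_bound[where B = 1])
    show "AE x in N. norm (e j x) \<le> 1" by (simp add: e_def)
    show "e j \<in> borel_measurable N" using that by (rule e_meas)
  qed
  have "integral\<^sup>L N (null_exceedances s H lam k) = (\<integral>x. (\<Sum>j<s k. e j x) \<partial>N)"
    by (intro Bochner_Integration.integral_cong) (auto simp: null_exceedances_def e_def intro!: sum.cong)
  also have "\<dots> = (\<Sum>j<s k. integral\<^sup>L N (e j))"
    using e_int by (intro Bochner_Integration.integral_sum) auto
  also have "\<dots> = (\<Sum>j<s k. (if H k j then 1 else 0) * (1 - lam))"
    using integral_uniform_component_greater[OF measurable_component_of_sets_PiM[OF sets_N] unif] lam
    by (intro sum.cong) (auto simp: e_def)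
  finally show ?thesis by (simp add: sum_distrib_right)
qed

lemma n0hat1_coordwise_mono:
  assumes "lam < 1"
  shows "coordwise_mono b s (n0hat1 b s lam)"
proof -
  have R_antimono: "R_count b s lam P \<le> R_count b s lam Q" if "\<And>k l. Q k l \<le> P k l" for P Q
    unfolding R_count_def using that by (intro sum_mono) (auto intro: order_trans)
  show ?thesis
    unfolding coordwise_mono_def n0hat1_def
    using assms by (auto intro!: divide_right_mono R_antimono)
qed

lemma n0hat1_DU_minus:
  assumes "0 \<le> lam" "i < b"
  shows "n0hat1 b s lam (DU_minus H i \<omega>)
           = (s_max b s + (\<Sum>k\<in>{..<b} - {i}. null_exceedances s H lam k (\<omega> k))) / (1 - lam)"
proof -
  have row_count: "(\<Sum>j<s k. if DU_minus H i \<omega> k j \<le> lam then 1 else 0)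
      = real (s k) - (if k = i then 0 else null_exceedances s H lam k (\<omega> k))" for k
  proof -
    have "(\<Sum>j<s k. if DU_minus H i \<omega> k j \<le> lam then 1 else 0)
        = (\<Sum>j<s k. 1 - (if k \<noteq> i \<and> H k j \<and> lam < \<omega> k j then 1 else 0 :: real))"
      using assms(1) by (intro sum.cong) (auto simp: DU_minus_def)
    then show ?thesis
      by (simp add: sum_subtractf null_exceedances_def)
  qed
  have "(\<Sum>k<b. if k = i then 0 else null_exceedances s H lam k (\<omega> k))
      = (\<Sum>k\<in>{..<b} - {i}. null_exceedances s H lam k (\<omega> k))"
    using assms(2) by (simp add: sum.If_cases Diff_eq Int_commute)
  then show ?thesis
    by (simp add: n0hat1_def R_count_def row_count sum_subtractf n_total_def)
qed

lemma n0hat1_DU_minus_integral_bounds: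
  fixes M :: "nat \<Rightarrow> (nat \<Rightarrow> real) measure"
  assumes product: "finite_product_prob_space M {..<b}" and s_max_pos: "0 < s_max b s"
    and rows_sets: "\<And>k. k < b \<Longrightarrow> sets (M k) = sets (Pi\<^sub>M {..<s k} (\<lambda>_. borel))"
    and null_unif: "\<And>k j. k < b \<Longrightarrow> j < s k \<Longrightarrow> H k j \<Longrightarrow>
                       distr (M k) borel (\<lambda>x. x j) = uniform_measure lborel {0..1}"
    and lam: "0 \<le> lam" "lam < 1"
  shows "\<And>i. i < b \<Longrightarrow> integrable (Pi\<^sub>M {..<b} M) (\<lambda>\<omega>. 1 / n0hat1 b s lam (DU_minus H i \<omega>))"
    and "(\<Sum>i<b. \<Sum>j<s i. (if H i j then 1 else 0)
            * integral\<^sup>L (Pi\<^sub>M {..<b} M) (\<lambda>\<omega>. 1 / n0hat1 b s lam (DU_minus H i \<omega>))) \<le> 1"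
proof -
  interpret finite_product_prob_space M "{..<b}" by (rule product)
  define S where "S = real (s_max b s)"
  define y where "y = null_exceedances s H lam"
  define inv_shift where "inv_shift i \<omega> = 1 / (S + (\<Sum>k\<in>{..<b} - {i}. y k (\<omega> k)))" for i \<omega>
  have inv_est: "(\<lambda>\<omega>. 1 / n0hat1 b s lam (DU_minus H i \<omega>)) = (\<lambda>\<omega>. (1 - lam) * inv_shift i \<omega>)"
    if "i < b" for i
    using n0hat1_DU_minus[OF lam(1) that] by (simp add: inv_shift_def y_def S_def)
  have y_meas: "y k \<in> borel_measurable (M k)" if "k < b" for k
    using that rows_sets by (simp add: y_def null_exceedances_measurable)
  have E_y: "integral\<^sup>L (M k) (y k) = (\<Sum>j<s k. if H k j then 1 else 0) * (1 - lam)" if "k < b" for k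
    using that lam rows_sets null_unif prob_space
    by (simp add: y_def integral_null_exceedances)
  have y_bounds: "0 \<le> y k x" "k < b \<Longrightarrow> y k x \<le> S" for k x
    using null_exceedances_bounds[of s H lam k x]
    by (auto simp: y_def S_def s_max_def intro: order_trans)
  have inv_shift_int: "integrable (Pi\<^sub>M {..<b} M) (inv_shift i)" for i
    unfolding inv_shift_def using y_meas y_bounds s_max_pos
    by (intro integrable_inverse_shift_sum_components) (auto simp: S_def)
  then show "integrable (Pi\<^sub>M {..<b} M) (\<lambda>\<omega>. 1 / n0hat1 b s lam (DU_minus H i \<omega>))" if "i < b" for i
    by (simp add: inv_est[OF that])
  have "(\<Sum>i<b. \<Sum>j<s i. (if H i j then 1 else 0)
          * integral\<^sup>L (Pi\<^sub>M {..<b} M) (\<lambda>\<omega>. 1 / n0hat1 b s lam (DU_minus H i \<omega>)))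
      = (\<Sum>i<b. integral\<^sup>L (M i) (y i) * integral\<^sup>L (Pi\<^sub>M {..<b} M) (inv_shift i))"
    by (intro sum.cong) (simp_all add: inv_est E_y sum_distrib_right[symmetric] mult.assoc)
  also have "\<dots> \<le> 1"
    unfolding inv_shift_def using y_meas y_bounds s_max_pos
    by (intro sum_expectation_mult_inverse_others_le_1) (auto simp: S_def)
  finally show "(\<Sum>i<b. \<Sum>j<s i. (if H i j then 1 else 0)
          * integral\<^sup>L (Pi\<^sub>M {..<b} M) (\<lambda>\<omega>. 1 / n0hat1 b s lam (DU_minus H i \<omega>))) \<le> 1" .
qed

theorem mainTheorem2:
  fixes b :: nat and s :: "nat \<Rightarrow> nat" and H :: "nat \<Rightarrow> nat \<Rightarrow> bool"
    and M :: "nat \<Rightarrow> (nat \<Rightarrow> real) measure" and lam :: real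
  assumes sizes: "\<And>i. i < b \<Longrightarrow> s i \<ge> 1"
    and n0: "n_true b s H \<ge> 1"
    and rows_prob: "\<And>i. i < b \<Longrightarrow> prob_space (M i)"
    and rows_sets: "\<And>i. i < b \<Longrightarrow> sets (M i) = sets (PiM {..<s i} (\<lambda>_. borel))"
    and null_unif: "\<And>i j. i < b \<Longrightarrow> j < s i \<Longrightarrow> H i j \<Longrightarrow>
                       distr (M i) borel (\<lambda>x. x j) = uniform_measure lborel {0..1}"
    and lam_lo: "(2 * real b + 3) powr (- 2 / (real b + 2)) \<le> lam"
    and lam_hi: "lam < 1"
  shows "property1 b s H M (n0hat1 b s lam)"
proof -
  have lam_nonneg: "0 \<le> lam"
    using order_trans[OF powr_ge_zero lam_lo] .
  have "0 < b"
    using n0 by (cases b) (auto simp: n_true_def)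
  then have "s 0 \<le> s_max b s"
    by (auto simp: s_max_def)
  then have s_max_pos: "0 < s_max b s"
    using sizes[OF \<open>0 < b\<close>] by linarith
  text \<open>The product locale wants every factor, also those outside \<open>{..<b}\<close>, to be a
    probability space.\<close>
  define M' where "M' i = (if i < b then M i else count_space {undefined})" for i
  have M'_prob: "prob_space (M' i)" for i
    by (auto simp: M'_def rows_prob intro!: prob_spaceI)
  have product: "finite_product_prob_space M' {..<b}"
    by (simp add: finite_product_prob_space_def finite_product_sigma_finite_def
        product_prob_space_def product_prob_space_axioms_def product_sigma_finite_def
        finite_product_sigma_finite_axioms_def M'_prob prob_space_imp_sigma_finite)
  have DU: "DU_space b M = Pi\<^sub>M {..<b} M'"
    unfolding DU_space_def by (rule PiM_cong) (auto simp: M'_def)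
  show ?thesis
    unfolding property1_def DU
    using n0hat1_coordwise_mono[OF lam_hi] lam_nonneg lam_hi s_max_pos rows_sets null_unif
      n0hat1_DU_minus_integral_bounds[OF product, of s H lam]
    by (simp add: M'_def)
qed

end
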